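(* Let $q$ be a prime power with $4\mid(q-1)$, $n\ge1$, let $\mathscr{C}\subseteq\mathrm{GF}(q^2)^n$ be a scalable code and let $\mathscr{B}$ be a basis of $\mathrm{GF}(q^2)$ over $\mathrm{GF}(q)$. If $\mathrm{Im}_{\mathscr{B}}(\mathscr{C})\subseteq\mathrm{GF}(q)^{2n}$ is self-orthogonal w.r.t. the canonical inner product $\sum_{i=1}^{2n}x_iy_i$, then $\mathscr{C}$ is self-orthogonal w.r.t. the canonical inner product $\sum_{i=1}^n x_iy_i$ on $\mathrm{GF}(q^2)^n$.
   Context: $\mathrm{Tr}:\mathrm{GF}(q^2)\to\mathrm{GF}(q)$, $\mathrm{Tr}(a)=a+a^q$. The dual basis of a basis $\{\gamma_1,\gamma_2\}$ is the unique basis $\{\beta_1,\beta_2\}$ with $\mathrm{Tr}(\gamma_i\beta_j)=\delta_{ij}$. A code $\mathscr{C}\subseteq\mathrm{GF}(q^2)^n$ is scalable if $x\in\mathscr{C}\Rightarrow\alpha x\in\mathscr{C}$ for all $\alpha\in\mathrm{GF}(q^2)$. For a basis $\mathscr{B}$ with dual basis $\{\beta_1,\beta_2\}$, $\mathrm{Im}_{\mathscr{B}}(\mathscr{C})=\{(\mathrm{Tr}(\beta_1x_1),\ldots,\mathrm{Tr}(\beta_1x_n),\mathrm{Tr}(\beta_2x_1),\ldots,\mathrm{Tr}(\beta_2x_n)):x\in\mathscr{C}\}$. A code $D$ is self-orthogonal w.r.t. a form $g$ if $g(x,y)=0$ for all $x,y\in D$. *)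

theory Defs
  imports "HOL-Computational_Algebra.Primes"
begin

text \<open>We model GF(q^2) as a finite field type 'a with CARD('a) = q^2.
  The subfield GF(q) is the set of fixed points of the Frobenius x \<mapsto> x^q.\<close>

definition subGF :: "nat \<Rightarrow> ('a::field) set" where
  "subGF q = {x. x ^ q = x}"

definition Tr :: "nat \<Rightarrow> 'a::field \<Rightarrow> 'a" where
  "Tr q a = a + a ^ q"

definition is_basis2 :: "nat \<Rightarrow> 'a::field \<Rightarrow> 'a \<Rightarrow> bool" where
  "is_basis2 q g1 g2 \<longleftrightarrow>
     (\<forall>a\<in>subGF q. \<forall>b\<in>subGF q. a * g1 + b * g2 = 0 \<longrightarrow> a = 0 \<and> b = 0) \<and>
     (\<forall>x. \<exists>a\<in>subGF q. \<exists>b\<in>subGF q. x = a * g1 + b * g2)"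

definition is_dual_basis2 :: "nat \<Rightarrow> 'a::field \<Rightarrow> 'a \<Rightarrow> 'a \<Rightarrow> 'a \<Rightarrow> bool" where
  "is_dual_basis2 q g1 g2 b1 b2 \<longleftrightarrow>
     Tr q (g1 * b1) = 1 \<and> Tr q (g1 * b2) = 0 \<and> Tr q (g2 * b1) = 0 \<and> Tr q (g2 * b2) = 1"

definition scalable :: "('a::field) list set \<Rightarrow> bool" where
  "scalable C \<longleftrightarrow> (\<forall>x\<in>C. \<forall>\<alpha>. map (\<lambda>c. \<alpha> * c) x \<in> C)"

definition ImB :: "nat \<Rightarrow> 'a::field \<Rightarrow> 'a \<Rightarrow> 'a list set \<Rightarrow> 'a list set" where
  "ImB q b1 b2 C =
     (\<lambda>x. map (\<lambda>c. Tr q (b1 * c)) x @ map (\<lambda>c. Tr q (b2 * c)) x) ` C"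

definition inner :: "'a::comm_ring list \<Rightarrow> 'a list \<Rightarrow> 'a" where
  "inner x y = (\<Sum>i<length x. x ! i * y ! i)"

definition self_orthogonal :: "'a::comm_ring list set \<Rightarrow> bool" where
  "self_orthogonal D \<longleftrightarrow> (\<forall>x\<in>D. \<forall>y\<in>D. inner x y = 0)"

end

theory Submission
  imports Defs "HOL-Computational_Algebra.Polynomial"
begin

text \<open>For codewords x, y and scalars \<alpha>, \<gamma>, expanding Tr(a) = a + a^q turns the inner product
  of the images of \<alpha>x and \<gamma>y into a combination of \<alpha>\<gamma>, \<alpha>\<gamma>^q, \<alpha>^q\<gamma> and \<alpha>^q\<gamma>^q
  whose \<alpha>\<gamma>-coefficient is (b1^2 + b2^2)<x,y>. A polynomial of degree at most q vanishing on
  GF(q^2) is zero, so this coefficient vanishes. Finally b1^2 + b2^2 \<noteq> 0: otherwise b1 = c b2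
  with c^2 = -1, and 4 | q - 1 puts c in GF(q), whence Tr(g1 b1) = c Tr(g1 b2) = 0.\<close>

lemma linear_coeff_eq_0_if_vanishing:
  fixes U V :: "'a::{field,finite}"
  assumes "\<And>x. U * x + V * x ^ q = 0" and "2 \<le> q" and "q < card (UNIV :: 'a set)"
  shows "U = 0"
proof -
  define p where "p = monom U 1 + monom V q"
  have "p = 0"
  proof (rule ccontr)
    assume "p \<noteq> 0"
    then have "card {x. poly p x = 0} \<le> degree p"
      by (rule card_poly_roots_bound)
    moreover have "{x. poly p x = 0} = UNIV"
      using assms(1) by (simp add: p_def poly_monom)
    moreover have "degree p \<le> q"
      unfolding p_def using assms(2)
      by (intro degree_add_le order.trans[OF degree_monom_le]) auto
    ultimately show False
      using assms(3) by simp
  qed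
  then have "coeff p 1 = 0"
    by simp
  then show ?thesis
    using assms(2) by (simp add: p_def)
qed

lemma bilinear_coeff_eq_0_if_vanishing:
  fixes A P Q R :: "'a::{field,finite}"
  assumes "\<And>\<alpha> \<gamma>. \<alpha> * \<gamma> * A + \<alpha> * \<gamma> ^ q * P + \<alpha> ^ q * \<gamma> * Q + \<alpha> ^ q * \<gamma> ^ q * R = 0"
    and "2 \<le> q" and "q < card (UNIV :: 'a set)"
  shows "A = 0"
proof -
  have coeff_\<alpha>: "\<gamma> * A + \<gamma> ^ q * P = 0" for \<gamma>
  proof (rule linear_coeff_eq_0_if_vanishing[OF _ assms(2,3)])
    show "(\<gamma> * A + \<gamma> ^ q * P) * \<alpha> + (\<gamma> * Q + \<gamma> ^ q * R) * \<alpha> ^ q = 0" for \<alpha>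
      using assms(1)[of \<alpha> \<gamma>] by (simp add: algebra_simps)
  qed
  have "A * \<gamma> + P * \<gamma> ^ q = 0" for \<gamma>
    using coeff_\<alpha>[of \<gamma>] by (simp add: mult.commute)
  then show ?thesis
    using assms(2,3) by (rule linear_coeff_eq_0_if_vanishing)
qed

lemma Tr_mult_Tr_scaled_sum:
  fixes b :: "'a::field"
  shows "\<exists>P Q R. \<forall>\<alpha> \<gamma>.
    (\<Sum>i<n. Tr q (b * (\<alpha> * x i)) * Tr q (b * (\<gamma> * y i)))
      = \<alpha> * \<gamma> * (b\<^sup>2 * (\<Sum>i<n. x i * y i)) + \<alpha> * \<gamma> ^ q * P + \<alpha> ^ q * \<gamma> * Q + \<alpha> ^ q * \<gamma> ^ q * R"
proof (intro exI allI)
  fix \<alpha> \<gamma> :: 'a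
  show "(\<Sum>i<n. Tr q (b * (\<alpha> * x i)) * Tr q (b * (\<gamma> * y i)))
      = \<alpha> * \<gamma> * (b\<^sup>2 * (\<Sum>i<n. x i * y i))
        + \<alpha> * \<gamma> ^ q * (\<Sum>i<n. b * b ^ q * x i * y i ^ q)
        + \<alpha> ^ q * \<gamma> * (\<Sum>i<n. b ^ q * b * x i ^ q * y i)
        + \<alpha> ^ q * \<gamma> ^ q * (\<Sum>i<n. b ^ q * b ^ q * x i ^ q * y i ^ q)"
    unfolding sum_distrib_left sum.distrib[symmetric]
    by (intro sum.cong refl) (simp add: Tr_def power_mult_distrib power2_eq_square algebra_simps)
qed

lemma inner_append:
  assumes "length a = length c" and "length b = length d"
  shows "inner (a @ b) (c @ d) = inner a c + inner b d"
proof -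
  let ?f = "\<lambda>i. (a @ b) ! i * (c @ d) ! i"
  have "inner (a @ b) (c @ d)
      = (\<Sum>i = 0..<length a. ?f i) + (\<Sum>i = length a..<length a + length b. ?f i)"
    unfolding inner_def lessThan_atLeast0 by (simp add: sum.atLeastLessThan_concat)
  also have "(\<Sum>i = 0..<length a. ?f i) = inner a c"
    unfolding inner_def lessThan_atLeast0 using assms by (intro sum.cong) (auto simp: nth_append)
  also have "(\<Sum>i = length a..<length a + length b. ?f i) = (\<Sum>i = 0..<length b. ?f (i + length a))"
    using sum.shift_bounds_nat_ivl[of ?f 0 "length a" "length b"] by (simp add: add.commute)
  also have "\<dots> = inner b d"
    unfolding inner_def lessThan_atLeast0 using assms by (intro sum.cong) (auto simp: nth_append)
  finally show ?thesis .
qed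

definition trace_image :: "nat \<Rightarrow> 'a::field \<Rightarrow> 'a \<Rightarrow> 'a list \<Rightarrow> 'a list" where
  "trace_image q b1 b2 x = map (\<lambda>c. Tr q (b1 * c)) x @ map (\<lambda>c. Tr q (b2 * c)) x"

lemma ImB_eq_image_trace_image: "ImB q b1 b2 C = trace_image q b1 b2 ` C"
  by (simp add: ImB_def trace_image_def)

lemma inner_trace_image:
  assumes "length x = length y"
  shows "inner (trace_image q b1 b2 x) (trace_image q b1 b2 y)
    = (\<Sum>i<length x. Tr q (b1 * x ! i) * Tr q (b1 * y ! i))
      + (\<Sum>i<length x. Tr q (b2 * x ! i) * Tr q (b2 * y ! i))"
  using assms unfolding trace_image_def by (subst inner_append) (simp_all add: inner_def)

lemma sum_squares_mult_inner_eq_0_if_scaled_trace_images_orthogonal: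
  fixes x y :: "'a::{field,finite} list"
  assumes "length x = length y" and "2 \<le> q" and "q < card (UNIV :: 'a set)"
    and orth: "\<And>\<alpha> \<gamma>. inner (trace_image q b1 b2 (map ((*) \<alpha>) x))
                          (trace_image q b1 b2 (map ((*) \<gamma>) y)) = 0"
  shows "(b1\<^sup>2 + b2\<^sup>2) * inner x y = 0"
proof -
  let ?n = "length x"
  obtain P1 Q1 R1 where b1_part: "\<And>\<alpha> \<gamma>.
      (\<Sum>i<?n. Tr q (b1 * (\<alpha> * x ! i)) * Tr q (b1 * (\<gamma> * y ! i)))
        = \<alpha> * \<gamma> * (b1\<^sup>2 * inner x y) + \<alpha> * \<gamma> ^ q * P1 + \<alpha> ^ q * \<gamma> * Q1 + \<alpha> ^ q * \<gamma> ^ q * R1"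
    using Tr_mult_Tr_scaled_sum[where b = b1 and q = q and n = ?n and x = "(!) x" and y = "(!) y"]
    by (auto simp: inner_def)
  obtain P2 Q2 R2 where b2_part: "\<And>\<alpha> \<gamma>.
      (\<Sum>i<?n. Tr q (b2 * (\<alpha> * x ! i)) * Tr q (b2 * (\<gamma> * y ! i)))
        = \<alpha> * \<gamma> * (b2\<^sup>2 * inner x y) + \<alpha> * \<gamma> ^ q * P2 + \<alpha> ^ q * \<gamma> * Q2 + \<alpha> ^ q * \<gamma> ^ q * R2"
    using Tr_mult_Tr_scaled_sum[where b = b2 and q = q and n = ?n and x = "(!) x" and y = "(!) y"]
    by (auto simp: inner_def)
  show ?thesis
  proof (rule bilinear_coeff_eq_0_if_vanishing[OF _ assms(2,3)])
    fix \<alpha> \<gamma> :: 'a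
    have "inner (trace_image q b1 b2 (map ((*) \<alpha>) x)) (trace_image q b1 b2 (map ((*) \<gamma>) y))
      = (\<Sum>i<?n. Tr q (b1 * (\<alpha> * x ! i)) * Tr q (b1 * (\<gamma> * y ! i)))
        + (\<Sum>i<?n. Tr q (b2 * (\<alpha> * x ! i)) * Tr q (b2 * (\<gamma> * y ! i)))"
      using assms(1) by (simp add: inner_trace_image)
    with orth[of \<alpha> \<gamma>]
    show "\<alpha> * \<gamma> * ((b1\<^sup>2 + b2\<^sup>2) * inner x y) + \<alpha> * \<gamma> ^ q * (P1 + P2)
        + \<alpha> ^ q * \<gamma> * (Q1 + Q2) + \<alpha> ^ q * \<gamma> ^ q * (R1 + R2) = 0"
      unfolding b1_part b2_part by (simp add: algebra_simps)
  qed
qed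

lemma power_eq_self_if_square_eq_minus_1:
  fixes c :: "'a::comm_ring_1"
  assumes "c\<^sup>2 = -1" and "4 dvd (q - 1)" and "0 < q"
  shows "c ^ q = c"
proof -
  obtain m where "q = 4 * m + 1"
    using assms(2,3) by (metis dvdE Suc_pred' Suc_eq_plus1)
  moreover have "c ^ 4 = 1"
    using assms(1) by (metis power_mult[of c 2 2] num_double numeral_times_numeral power2_minus power_one)
  ultimately show ?thesis
    by (simp add: power_add power_mult)
qed

lemma dual_basis_sum_squares_neq_0:
  assumes "is_dual_basis2 q g1 g2 b1 b2" and "4 dvd (q - 1)" and "0 < q"
  shows "b1\<^sup>2 + b2\<^sup>2 \<noteq> 0"
proof
  assume sum_squares: "b1\<^sup>2 + b2\<^sup>2 = 0"
  have Tr_g1b1: "Tr q (g1 * b1) = 1" and Tr_g1b2: "Tr q (g1 * b2) = 0"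
    and Tr_g2b2: "Tr q (g2 * b2) = 1"
    using assms(1) by (auto simp: is_dual_basis2_def)
  have "b2 \<noteq> 0"
    using Tr_g2b2 assms(3) by (auto simp: Tr_def power_0_left)
  define c where "c = b1 / b2"
  have b1_eq: "b1 = c * b2"
    using \<open>b2 \<noteq> 0\<close> by (simp add: c_def)
  have "b2\<^sup>2 * (c\<^sup>2 + 1) = 0"
    using sum_squares unfolding b1_eq by (simp add: power_mult_distrib algebra_simps)
  then have "c\<^sup>2 = -1"
    using \<open>b2 \<noteq> 0\<close> by (simp add: eq_neg_iff_add_eq_0)
  then have "c ^ q = c"
    using assms(2,3) by (rule power_eq_self_if_square_eq_minus_1)
  then have "Tr q (g1 * b1) = c * Tr q (g1 * b2)"
    unfolding Tr_def b1_eq by (simp add: power_mult_distrib algebra_simps)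
  with Tr_g1b1 Tr_g1b2 show False
    by simp
qed

theorem proposition4:
  fixes q n :: nat
    and C :: "('a::{field,finite}) list set"
    and g1 g2 b1 b2 :: "'a"
  assumes "\<exists>p k. prime p \<and> k > 0 \<and> q = p ^ k"
    and "card (UNIV :: 'a set) = q ^ 2"
    and "4 dvd (q - 1)"
    and "n \<ge> 1"
    and "\<forall>x\<in>C. length x = n"
    and "scalable C"
    and "is_basis2 q g1 g2"
    and "is_dual_basis2 q g1 g2 b1 b2"
    and "self_orthogonal (ImB q b1 b2 C)"
  shows "self_orthogonal C"
proof -
  have "2 \<le> card (UNIV :: 'a set)"
    using card_mono[of UNIV "{0::'a, 1}"] by simp
  then have "2 \<le> q"
    using assms(2) by (cases "q \<le> 1") (auto simp: le_Suc_eq)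
  then have "q < card (UNIV :: 'a set)"
    using assms(2) by (simp add: power2_eq_square)
  have "b1\<^sup>2 + b2\<^sup>2 \<noteq> 0"
    using \<open>2 \<le> q\<close> by (intro dual_basis_sum_squares_neq_0[OF assms(8,3)]) simp
  show ?thesis
    unfolding self_orthogonal_def
  proof (intro ballI)
    fix x y
    assume "x \<in> C" and "y \<in> C"
    then have "length x = length y"
      using assms(5) by simp
    moreover have "inner (trace_image q b1 b2 (map ((*) \<alpha>) x))
                         (trace_image q b1 b2 (map ((*) \<gamma>) y)) = 0" for \<alpha> \<gamma>
      using \<open>x \<in> C\<close> \<open>y \<in> C\<close> assms(6,9)
      unfolding scalable_def self_orthogonal_def ImB_eq_image_trace_image
      by (metis image_eqI)
    ultimately have "(b1\<^sup>2 + b2\<^sup>2) * inner x y = 0"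
      by (rule sum_squares_mult_inner_eq_0_if_scaled_trace_images_orthogonal
          [OF _ \<open>2 \<le> q\<close> \<open>q < card (UNIV :: 'a set)\<close>])
    with \<open>b1\<^sup>2 + b2\<^sup>2 \<noteq> 0\<close> show "inner x y = 0"
      by simp
  qed
qed

end
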